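(* Let $G$ be a directed $st$-graph, let $T\neq\{s\}$ be a minimal vertex separator of $G$ and let $b\in T$. Then $T$ is $b$-minimal if and only if $(T\cup\mathrm{pred}(u))\setminus\{b\}\preceq b$ for every $u\in T$.
   Context: A directed $st$-graph $G=(V,E,s,t)$ is a finite directed graph with no self-loops and no parallel edges, with distinct source $s$ (no incoming edges) and sink $t$ (no outgoing edges), such that every vertex lies on some directed walk from $s$ to $t$. A vertex separator is a set $T\subseteq V$ meeting every $s$–$t$ walk; an mvs is an inclusion-minimal one. $\mathrm{pred}(u)=\{v\in V: (v,u)\in E\}$. For $A\subseteq V$, $u\in V$: $A\preceq u$ if every directed walk from $s$ to $u$ contains a vertex of $A$; $u\sqsubseteq A$ if every directed walk from $u$ to $t$ contains a vertex of $A$; $A\sqsubseteq A'$ if $u\sqsubseteq A'$ for all $u\in A$; $A\sqsubset A'$ means $A\sqsubseteq A'$, $A\ne A'$. An mvs $T$ is $b$-minimal if $b\in T$ and $b\notin T'$ for every mvs $T'\sqsubset T$. *)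

theory Defs
  imports Main
begin

definition walk :: "'a set \<Rightarrow> ('a \<times> 'a) set \<Rightarrow> 'a list \<Rightarrow> bool" where
  "walk V E ws \<longleftrightarrow> ws \<noteq> [] \<and> set ws \<subseteq> V \<and>
     (\<forall>i. Suc i < length ws \<longrightarrow> (ws ! i, ws ! Suc i) \<in> E)"

definition walk_from_to :: "'a set \<Rightarrow> ('a \<times> 'a) set \<Rightarrow> 'a \<Rightarrow> 'a \<Rightarrow> 'a list \<Rightarrow> bool" where
  "walk_from_to V E u v ws \<longleftrightarrow> walk V E ws \<and> hd ws = u \<and> last ws = v"

definition st_graph :: "'a set \<Rightarrow> ('a \<times> 'a) set \<Rightarrow> 'a \<Rightarrow> 'a \<Rightarrow> bool" where
  "st_graph V E s t \<longleftrightarrow> finite V \<and> E \<subseteq> V \<times> V \<and> (\<forall>v. (v, v) \<notin> E) \<and>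
     s \<in> V \<and> t \<in> V \<and> s \<noteq> t \<and>
     (\<forall>v. (v, s) \<notin> E) \<and> (\<forall>v. (t, v) \<notin> E) \<and>
     (\<forall>v\<in>V. \<exists>ws. walk_from_to V E s t ws \<and> v \<in> set ws)"

definition vertex_separator :: "'a set \<Rightarrow> ('a \<times> 'a) set \<Rightarrow> 'a \<Rightarrow> 'a \<Rightarrow> 'a set \<Rightarrow> bool" where
  "vertex_separator V E s t T \<longleftrightarrow> T \<subseteq> V \<and>
     (\<forall>ws. walk_from_to V E s t ws \<longrightarrow> set ws \<inter> T \<noteq> {})"

definition mvs :: "'a set \<Rightarrow> ('a \<times> 'a) set \<Rightarrow> 'a \<Rightarrow> 'a \<Rightarrow> 'a set \<Rightarrow> bool" where
  "mvs V E s t T \<longleftrightarrow> vertex_separator V E s t T \<and>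
     (\<forall>T'. T' \<subset> T \<longrightarrow> \<not> vertex_separator V E s t T')"

definition pred :: "'a set \<Rightarrow> ('a \<times> 'a) set \<Rightarrow> 'a \<Rightarrow> 'a set" where
  "pred V E u = {v \<in> V. (v, u) \<in> E}"

definition precedes :: "'a set \<Rightarrow> ('a \<times> 'a) set \<Rightarrow> 'a \<Rightarrow> 'a set \<Rightarrow> 'a \<Rightarrow> bool" where
  "precedes V E s A u \<longleftrightarrow> (\<forall>ws. walk_from_to V E s u ws \<longrightarrow> set ws \<inter> A \<noteq> {})"

definition below_v :: "'a set \<Rightarrow> ('a \<times> 'a) set \<Rightarrow> 'a \<Rightarrow> 'a \<Rightarrow> 'a set \<Rightarrow> bool" where
  "below_v V E t u A \<longleftrightarrow> (\<forall>ws. walk_from_to V E u t ws \<longrightarrow> set ws \<inter> A \<noteq> {})"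

definition below :: "'a set \<Rightarrow> ('a \<times> 'a) set \<Rightarrow> 'a \<Rightarrow> 'a set \<Rightarrow> 'a set \<Rightarrow> bool" where
  "below V E t A A' \<longleftrightarrow> (\<forall>u\<in>A. below_v V E t u A')"

definition strictly_below :: "'a set \<Rightarrow> ('a \<times> 'a) set \<Rightarrow> 'a \<Rightarrow> 'a set \<Rightarrow> 'a set \<Rightarrow> bool" where
  "strictly_below V E t A A' \<longleftrightarrow> below V E t A A' \<and> A \<noteq> A'"

definition b_minimal :: "'a set \<Rightarrow> ('a \<times> 'a) set \<Rightarrow> 'a \<Rightarrow> 'a \<Rightarrow> 'a \<Rightarrow> 'a set \<Rightarrow> bool" where
  "b_minimal V E s t b T \<longleftrightarrow> mvs V E s t T \<and> b \<in> T \<and>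
     (\<forall>T'. mvs V E s t T' \<and> strictly_below V E t T' T \<longrightarrow> b \<notin> T')"

end

theory Submission
  imports Defs
begin

text \<open>Forward direction, by an exchange argument: if an s-b walk S avoids
  (T \<union> pred u) - {b}, replace u in T by those predecessors of u that s reaches without meeting T.
  The result is a separator below T that misses u, and every minimal separator inside it contains b,
  since otherwise S followed by a T-free exit walk from b to t would avoid it; this contradicts
  b-minimality. Backward direction: if T' \<sqsubset> T is minimal with b \<in> T', pick u \<in> T - T' and an
  s-t walk meeting T' only in b. Its part before b meets T \<union> pred u in some y', and the walk to y'
  (extended by the edge to u when y' is a predecessor of u) reaches a vertex of T avoiding T'; but a
  separator below the minimal separator T must precede every vertex of T.\<close>

lemma walk_iff_successively:
  "walk V E ws \<longleftrightarrow> ws \<noteq> [] \<and> set ws \<subseteq> V \<and> successively (\<lambda>x y. (x, y) \<in> E) ws"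
  unfolding walk_def successively_conv_nth by blast

lemma walk_from_to_append:
  assumes "walk_from_to V E a b P" and "walk_from_to V E b c Q"
  shows "walk_from_to V E a c (P @ tl Q)"
proof -
  obtain Q' where "Q = b # Q'"
    using assms(2) unfolding walk_from_to_def walk_def by (cases Q) auto
  then show ?thesis
    using assms unfolding walk_from_to_def walk_iff_successively
    by (auto simp: successively_append_iff successively_Cons)
qed

lemma walk_from_to_split:
  assumes "walk_from_to V E a c (xs @ w # ys)"
  shows "walk_from_to V E a w (xs @ [w])" and "walk_from_to V E w c (w # ys)"
  using assms unfolding walk_from_to_def walk_iff_successively
  by (auto simp: successively_append_iff successively_Cons hd_append)

lemma walk_from_to_snoc:
  assumes "walk_from_to V E a b P" and "b \<in> pred V E c" and "c \<in> V"
  shows "walk_from_to V E a c (P @ [c])"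
  using walk_from_to_append[OF assms(1), of c "[b, c]"] assms(2,3)
  unfolding walk_from_to_def walk_def pred_def by (auto simp: nth_Cons split: nat.split)

lemma walk_from_to_snoc_pred:
  assumes "walk_from_to V E a c (xs @ [c])" and "xs \<noteq> []"
  shows "last xs \<in> pred V E c"
  using assms unfolding walk_from_to_def walk_iff_successively pred_def
  by (auto simp: successively_append_iff)

lemma walk_from_to_hd_in_set: "walk_from_to V E a c W \<Longrightarrow> a \<in> set W"
  unfolding walk_from_to_def walk_def by auto

lemma walk_from_to_first_hit:
  assumes "walk_from_to V E a c W" and "set W \<inter> A \<noteq> {}"
  obtains xs y where "walk_from_to V E a y (xs @ [y])" "y \<in> A" "set xs \<inter> A = {}"
    "set (xs @ [y]) \<subseteq> set W"
proof -
  obtain xs y ys where "W = xs @ y # ys" "y \<in> A" "\<forall>z\<in>set xs. z \<notin> A"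
    using split_list_first_prop[of W "\<lambda>v. v \<in> A"] assms(2) by blast
  then show ?thesis
    using that walk_from_to_split(1) assms(1) by fastforce
qed

lemma mvs_walk_through:
  assumes "mvs V E s t T" and "x \<in> T"
  obtains W where "walk_from_to V E s t W" "x \<in> set W" "set W \<inter> (T - {x}) = {}"
proof -
  have "\<not> vertex_separator V E s t (T - {x})" and "T - {x} \<subseteq> V"
    using assms unfolding mvs_def vertex_separator_def by blast+
  then obtain W where "walk_from_to V E s t W" "set W \<inter> (T - {x}) = {}"
    unfolding vertex_separator_def by blast
  moreover from this have "set W \<inter> T \<noteq> {}"
    using assms(1) unfolding mvs_def vertex_separator_def by blast
  ultimately show ?thesis using that by blast
qed

lemma mvs_exit_walk:
  assumes "mvs V E s t T" and "x \<in> T"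
  obtains zs where "walk_from_to V E x t (x # zs)" "set zs \<inter> T = {}"
proof -
  obtain W where W: "walk_from_to V E s t W" "x \<in> set W" "set W \<inter> (T - {x}) = {}"
    using mvs_walk_through[OF assms] .
  obtain ys zs where "W = ys @ x # zs" "x \<notin> set zs"
    using split_list_last_prop[of W "\<lambda>v. v = x"] W(2) by blast
  then show ?thesis
    using that walk_from_to_split(2) W(1,3) by fastforce
qed

lemma source_notin_mvs:
  assumes "st_graph V E s t" and "mvs V E s t T" and "T \<noteq> {s}"
  shows "s \<notin> T"
proof
  assume "s \<in> T"
  then have "{s} \<subset> T" using assms(3) by blast
  moreover have "vertex_separator V E s t {s}"
    using assms(1) walk_from_to_hd_in_set unfolding vertex_separator_def st_graph_def by fastforce
  ultimately show False using assms(2) unfolding mvs_def by blast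
qed

lemma exists_mvs_subset:
  assumes "finite V" and "vertex_separator V E s t X"
  obtains T where "T \<subseteq> X" "mvs V E s t T"
proof -
  define \<S> where "\<S> = {Y. Y \<subseteq> X \<and> vertex_separator V E s t Y}"
  have "finite X" using assms finite_subset unfolding vertex_separator_def by blast
  then have "finite \<S>" unfolding \<S>_def by simp
  moreover have "X \<in> \<S>" using assms(2) unfolding \<S>_def by blast
  ultimately obtain T where T: "T \<in> \<S>" "\<And>Y. Y \<in> \<S> \<Longrightarrow> Y \<subseteq> T \<Longrightarrow> T = Y"
    using finite_has_minimal[of \<S>] by blast
  have "mvs V E s t T"
    unfolding mvs_def
  proof (intro conjI allI impI notI)
    show "vertex_separator V E s t T" using T(1) unfolding \<S>_def by blast
  next
    fix Y assume "Y \<subset> T" and "vertex_separator V E s t Y"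
    then have "Y \<in> \<S>" using T(1) unfolding \<S>_def by blast
    with \<open>Y \<subset> T\<close> show False using T(2) by blast
  qed
  moreover have "T \<subseteq> X" using T(1) unfolding \<S>_def by blast
  ultimately show ?thesis using that by blast
qed

text \<open>Every walk from s to a vertex x of T extends, along the exit walk of x, to an s-t walk whose
  part after x avoids T; a separator below T must therefore be met before x.\<close>
lemma precedes_if_below:
  assumes "mvs V E s t T" and "vertex_separator V E s t T'" and "below V E t T' T"
    and "x \<in> T"
  shows "precedes V E s T' x"
  unfolding precedes_def
proof (intro allI impI notI)
  fix P assume P: "walk_from_to V E s x P" and "set P \<inter> T' = {}"
  obtain zs where zs: "walk_from_to V E x t (x # zs)" "set zs \<inter> T = {}"
    using mvs_exit_walk[OF assms(1,4)] .
  have "walk_from_to V E s t (P @ zs)" using walk_from_to_append[OF P zs(1)] by simp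
  then have "set (P @ zs) \<inter> T' \<noteq> {}" using assms(2) unfolding vertex_separator_def by blast
  with \<open>set P \<inter> T' = {}\<close> obtain w where w: "w \<in> set zs" "w \<in> T'" by auto
  then obtain ys ws where "zs = ys @ w # ws" by (meson split_list)
  then have "walk_from_to V E w t (w # ws)" and "set (w # ws) \<inter> T = {}"
    using walk_from_to_split(2)[of V E x t "x # ys"] zs by auto
  moreover have "below_v V E t w T" using assms(3) w(2) unfolding below_def by blast
  ultimately show False unfolding below_v_def by blast
qed

definition reach_avoiding :: "'a set \<Rightarrow> ('a \<times> 'a) set \<Rightarrow> 'a \<Rightarrow> 'a set \<Rightarrow> 'a set" where
  "reach_avoiding V E s T = {v. \<exists>P. walk_from_to V E s v P \<and> set P \<inter> T = {}}"

lemma below_v_if_reach_avoiding: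
  assumes "vertex_separator V E s t T" and "x \<in> reach_avoiding V E s T"
  shows "below_v V E t x T"
  unfolding below_v_def
proof (intro allI impI)
  fix Q assume Q: "walk_from_to V E x t Q"
  obtain P where P: "walk_from_to V E s x P" "set P \<inter> T = {}"
    using assms(2) unfolding reach_avoiding_def by blast
  have "set (P @ tl Q) \<inter> T \<noteq> {}"
    using walk_from_to_append[OF P(1) Q] assms(1) unfolding vertex_separator_def by blast
  then show "set Q \<inter> T \<noteq> {}" using P(2) by (cases Q) auto
qed

definition exchange_separator :: "'a set \<Rightarrow> ('a \<times> 'a) set \<Rightarrow> 'a \<Rightarrow> 'a set \<Rightarrow> 'a \<Rightarrow> 'a set" where
  "exchange_separator V E s T u = (T - {u}) \<union> (pred V E u \<inter> reach_avoiding V E s T)"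

lemma vertex_separator_exchange:
  assumes sep: "vertex_separator V E s t T" and "u \<noteq> s"
  shows "vertex_separator V E s t (exchange_separator V E s T u)"
  unfolding vertex_separator_def
proof (intro conjI allI impI)
  show "exchange_separator V E s T u \<subseteq> V"
    using sep unfolding exchange_separator_def vertex_separator_def pred_def by blast
next
  fix W assume W: "walk_from_to V E s t W"
  have "set W \<inter> T \<noteq> {}" using W sep unfolding vertex_separator_def by blast
  from walk_from_to_first_hit[OF W this] obtain xs y where Y: "walk_from_to V E s y (xs @ [y])" "y \<in> T" "set xs \<inter> T = {}"
    "set (xs @ [y]) \<subseteq> set W" .
  show "set W \<inter> exchange_separator V E s T u \<noteq> {}"
  proof (cases "y = u")
    case True
    have "xs \<noteq> []" using Y(1) True \<open>u \<noteq> s\<close> unfolding walk_from_to_def by auto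
    then obtain ys where ys: "xs = ys @ [last xs]" by (metis append_butlast_last_id)
    with Y(1) have "walk_from_to V E s y (ys @ last xs # [y])"
      by (metis append.assoc append_Cons append_Nil)
    then have "walk_from_to V E s (last xs) xs" using walk_from_to_split(1) ys by metis
    with \<open>set xs \<inter> T = {}\<close> have "last xs \<in> reach_avoiding V E s T"
      unfolding reach_avoiding_def by blast
    moreover have "last xs \<in> pred V E u"
      using walk_from_to_snoc_pred[OF _ \<open>xs \<noteq> []\<close>] Y(1) True by simp
    moreover have "last xs \<in> set W" using Y(4) \<open>xs \<noteq> []\<close> by auto
    ultimately show ?thesis unfolding exchange_separator_def by blast
  qed (use Y in \<open>auto simp: exchange_separator_def\<close>)
qed

lemma below_exchange_separator:
  assumes "vertex_separator V E s t T"
  shows "below V E t (exchange_separator V E s T u) T"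
  unfolding below_def exchange_separator_def
proof
  fix x assume "x \<in> (T - {u}) \<union> (pred V E u \<inter> reach_avoiding V E s T)"
  then show "below_v V E t x T"
  proof (elim UnE)
    assume "x \<in> T - {u}"
    then show ?thesis unfolding below_v_def by (auto dest: walk_from_to_hd_in_set)
  qed (use below_v_if_reach_avoiding[OF assms] in blast)
qed

lemma precedes_if_b_minimal:
  assumes G: "st_graph V E s t" and bmin: "b_minimal V E s t b T"
    and "s \<notin> T" and uT: "u \<in> T"
  shows "precedes V E s ((T \<union> pred V E u) - {b}) b"
  unfolding precedes_def
proof (intro allI impI notI)
  fix S assume S: "walk_from_to V E s b S"
    and avoid: "set S \<inter> ((T \<union> pred V E u) - {b}) = {}"
  have M: "mvs V E s t T" and bT: "b \<in> T" using bmin unfolding b_minimal_def by blast+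
  have sepT: "vertex_separator V E s t T" using M unfolding mvs_def by blast
  let ?X = "exchange_separator V E s T u"
  have "u \<noteq> s" using uT \<open>s \<notin> T\<close> by blast
  obtain T' where T': "T' \<subseteq> ?X" "mvs V E s t T'"
    using exists_mvs_subset vertex_separator_exchange[OF sepT \<open>u \<noteq> s\<close>] G
    unfolding st_graph_def by metis
  have "b \<in> T'"
  proof (rule ccontr)
    assume "b \<notin> T'"
    obtain zs where zs: "walk_from_to V E b t (b # zs)" "set zs \<inter> T = {}"
      using mvs_exit_walk[OF M bT] .
    have "walk_from_to V E s t (S @ zs)" using walk_from_to_append[OF S zs(1)] by simp
    then obtain w where w: "w \<in> set (S @ zs)" "w \<in> T'"
      using T'(2) unfolding mvs_def vertex_separator_def by blast
    then have wX: "w \<in> ?X" "w \<noteq> b" using T'(1) \<open>b \<notin> T'\<close> by auto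
    then have "w \<notin> set S" using avoid unfolding exchange_separator_def by blast
    then have "w \<in> set zs" using w(1) by simp
    then obtain ys ws where "zs = ys @ w # ws" by (meson split_list)
    then have "walk_from_to V E w t (w # ws)" and "set (w # ws) \<inter> T = {}"
      using walk_from_to_split(2)[of V E b t "b # ys"] zs by auto
    moreover have "w \<in> reach_avoiding V E s T"
      using \<open>w \<in> set zs\<close> zs(2) wX unfolding exchange_separator_def by blast
    ultimately show False using below_v_if_reach_avoiding[OF sepT] unfolding below_v_def by blast
  qed
  moreover have "strictly_below V E t T' T"
  proof -
    have "u \<notin> ?X" using G unfolding st_graph_def exchange_separator_def pred_def by blast
    then have "T' \<noteq> T" using uT T'(1) by blast
    moreover have "below V E t T' T"
      using below_exchange_separator[OF sepT] T'(1) unfolding below_def by blast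
    ultimately show ?thesis unfolding strictly_below_def by blast
  qed
  ultimately show False using bmin T'(2) unfolding b_minimal_def by blast
qed

lemma b_minimal_if_precedes:
  assumes M: "mvs V E s t T" and bT: "b \<in> T"
    and prec: "\<forall>u\<in>T. precedes V E s ((T \<union> pred V E u) - {b}) b"
  shows "b_minimal V E s t b T"
  unfolding b_minimal_def
proof (intro conjI allI impI notI M bT)
  fix T' assume "mvs V E s t T' \<and> strictly_below V E t T' T" and bT': "b \<in> T'"
  then have M': "mvs V E s t T'" and below: "below V E t T' T" and "T' \<noteq> T"
    unfolding strictly_below_def by blast+
  have sepT: "vertex_separator V E s t T" and sepT': "vertex_separator V E s t T'"
    using M M' unfolding mvs_def by blast+
  have "\<not> T \<subset> T'" using M' sepT unfolding mvs_def by blast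
  with \<open>T' \<noteq> T\<close> obtain u where u: "u \<in> T" "u \<notin> T'" by blast
  obtain W where W: "walk_from_to V E s t W" "b \<in> set W" "set W \<inter> (T' - {b}) = {}"
    using mvs_walk_through[OF M' bT'] .
  have "set W \<inter> {b} \<noteq> {}" using W(2) by blast
  from walk_from_to_first_hit[OF W(1) this] obtain xs y
    where "walk_from_to V E s y (xs @ [y])" "y \<in> {b}" "set xs \<inter> {b} = {}"
      "set (xs @ [y]) \<subseteq> set W" .
  then have xs: "walk_from_to V E s b (xs @ [b])" and xsT': "set xs \<inter> T' = {}"
    using W(3) by auto
  then have "set (xs @ [b]) \<inter> ((T \<union> pred V E u) - {b}) \<noteq> {}"
    using prec u(1) unfolding precedes_def by blast
  then obtain y' where y': "y' \<in> set xs" "y' \<in> T \<union> pred V E u" by auto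
  then obtain as cs where "xs = as @ y' # cs" by (meson split_list)
  then have P: "walk_from_to V E s y' (as @ [y'])" and PT': "set (as @ [y']) \<inter> T' = {}"
    using walk_from_to_split(1)[of V E s b as y' "cs @ [b]"] xs xsT' by auto
  show False
  proof (cases "y' \<in> T")
    case True
    then show False
      using precedes_if_below[OF M sepT' below] P PT' unfolding precedes_def by blast
  next
    case False
    then have "y' \<in> pred V E u" using y'(2) by blast
    moreover have "u \<in> V" using u(1) sepT unfolding vertex_separator_def by blast
    ultimately have "walk_from_to V E s u (as @ [y', u])"
      using walk_from_to_snoc[OF P] by simp
    moreover have "set (as @ [y', u]) \<inter> T' = {}" using PT' u(2) by auto
    ultimately show False
      using precedes_if_below[OF M sepT' below u(1)] unfolding precedes_def by blast
  qed
qed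

theorem theorem4:
  assumes "st_graph V E s t"
    and "mvs V E s t T"
    and "T \<noteq> {s}"
    and "b \<in> T"
  shows "b_minimal V E s t b T \<longleftrightarrow>
           (\<forall>u\<in>T. precedes V E s ((T \<union> pred V E u) - {b}) b)"
  using precedes_if_b_minimal[OF assms(1) _ source_notin_mvs[OF assms(1-3)]]
    b_minimal_if_precedes[OF assms(2,4)] by blast

end
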